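(* The sequent calculi $\mathbf{GCE}$, $\mathbf{GCM}$, $\mathbf{GCEN}$, $\mathbf{GCMN}$, $\mathbf{GCMC}$, $\mathbf{GCK}$ are sound and complete for the logics $\mathsf{CE}$, $\mathsf{CM}$, $\mathsf{CEN}$, $\mathsf{CMN}$, $\mathsf{CMC}$, $\mathsf{CK}$ respectively: for every formula $\phi$ of $\mathcal{L}_\triangleright$, the sequent $\Rightarrow\phi$ is derivable in the calculus iff $\phi$ belongs to the corresponding logic.
   Context: Formulas of $\mathcal{L}_\triangleright$ are built from atoms and $\bot$ with $\wedge,\vee,\to$ and binary $\triangleright$; $\top:=\bot\to\bot$. $\mathsf{CE}$ is the smallest set of $\mathcal{L}_\triangleright$-formulas containing all instances of classical tautologies and closed under modus ponens and the rule: from $\phi_0\leftrightarrow\phi_1$ and $\psi_0\leftrightarrow\psi_1$ infer $(\phi_0\triangleright\psi_0)\to(\phi_1\triangleright\psi_1)$. Axiom schemes: (CM) $(\phi\triangleright\psi\wedge\theta)\to(\phi\triangleright\psi)\wedge(\phi\triangleright\theta)$; (CC) $(\phi\triangleright\psi)\wedge(\phi\triangleright\theta)\to(\phi\triangleright\psi\wedge\theta)$; (CN) $\phi\triangleright\top$. $\mathsf{CEN}=\mathsf{CE}+(CN)$, $\mathsf{CM}=\mathsf{CE}+(CM)$, $\mathsf{CMN}=\mathsf{CM}+(CN)$, $\mathsf{CMC}=\mathsf{CM}+(CC)$, $\mathsf{CK}=\mathsf{CMC}+(CN)$ (adding all instances of the schemes as axioms). Sequents are $\Gamma\Rightarrow\Delta$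 with $\Gamma,\Delta$ finite multisets of formulas. $\mathbf{G3cp}$ has axioms $\Gamma,p\Rightarrow p,\Delta$ ($p$ atomic) and $\Gamma,\bot\Rightarrow\Delta$, and rules: $(L\wedge)$ from $\Gamma,\phi,\psi\Rightarrow\Delta$ infer $\Gamma,\phi\wedge\psi\Rightarrow\Delta$; $(R\wedge)$ from $\Gamma\Rightarrow\phi,\Delta$ and $\Gamma\Rightarrow\psi,\Delta$ infer $\Gamma\Rightarrow\phi\wedge\psi,\Delta$; $(L\vee)$ from $\Gamma,\phi\Rightarrow\Delta$ and $\Gamma,\psi\Rightarrow\Delta$ infer $\Gamma,\phi\vee\psi\Rightarrow\Delta$; $(R\vee)$ from $\Gamma\Rightarrow\phi,\psi,\Delta$ infer $\Gamma\Rightarrow\phi\vee\psi,\Delta$; $(L\to)$ from $\Gamma\Rightarrow\phi,\Delta$ and $\Gamma,\psi\Rightarrow\Delta$ infer $\Gamma,\phi\to\psi\Rightarrow\Delta$; $(R\to)$ from $\Gamma,\phi\Rightarrow\psi,\Delta$ infer $\Gamma\Rightarrow\phi\to\psi,\Delta$. $\mathbf{G3W}$ is $\mathbf{G3cp}$ plus weakening: from $\Gamma\Rightarrow\Delta$ infer $\Gamma,\phi\Rightarrow\Delta$, resp. $\Gamma\Rightarrow\phi,\Delta$. "$\alpha\Leftrightarrow\beta$" as a premise abbreviates the two premises $\alpha\Rightarrow\beta$, $\beta\Rightarrow\alpha$. Conditional rules: $(CE)$ from $\phi_0\Leftrightarrow\phi_1$ and $\psi_0\Leftrightarrow\psi_1$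 infer $\phi_1\triangleright\psi_1\Rightarrow\phi_0\triangleright\psi_0$; $(CM)$ from $\phi_0\Leftrightarrow\phi_1$ and $\psi_1\Rightarrow\psi_0$ infer $\phi_1\triangleright\psi_1\Rightarrow\phi_0\triangleright\psi_0$; $(CMC)$ for $n\ge1$, from $\phi_0\Leftrightarrow\phi_i$ ($1\le i\le n$) and $\psi_1,\dots,\psi_n\Rightarrow\psi_0$ infer $\phi_1\triangleright\psi_1,\dots,\phi_n\triangleright\psi_n\Rightarrow\phi_0\triangleright\psi_0$; $(CN)$ from $\Rightarrow\psi_0$ infer $\Rightarrow\phi_0\triangleright\psi_0$. $\mathbf{GCE},\mathbf{GCM},\mathbf{GCMC}$ are $\mathbf{G3W}$ plus $(CE)$, $(CM)$, $(CMC)$; $\mathbf{GCEN},\mathbf{GCMN},\mathbf{GCK}$ are these plus $(CN)$. The cut rule is not part of the calculi. *)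

theory Defs
  imports Main "HOL-Library.Multiset"
begin

datatype 'a form =
    Atom 'a
  | Bot
  | And "'a form" "'a form"
  | Or "'a form" "'a form"
  | Imp "'a form" "'a form"
  | Cond "'a form" "'a form"

definition Top :: "'a form" where "Top = Imp Bot Bot"

definition Iff :: "'a form \<Rightarrow> 'a form \<Rightarrow> 'a form" where
  "Iff a b = And (Imp a b) (Imp b a)"

fun cond_free :: "'a form \<Rightarrow> bool" where
  "cond_free (Atom p) = True"
| "cond_free Bot = True"
| "cond_free (And a b) = (cond_free a \<and> cond_free b)"
| "cond_free (Or a b) = (cond_free a \<and> cond_free b)"
| "cond_free (Imp a b) = (cond_free a \<and> cond_free b)"
| "cond_free (Cond a b) = False"

fun peval :: "('a \<Rightarrow> bool) \<Rightarrow> 'a form \<Rightarrow> bool" where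
  "peval v (Atom p) = v p"
| "peval v Bot = False"
| "peval v (And a b) = (peval v a \<and> peval v b)"
| "peval v (Or a b) = (peval v a \<or> peval v b)"
| "peval v (Imp a b) = (peval v a \<longrightarrow> peval v b)"
| "peval v (Cond a b) = False"

definition ptaut :: "nat form \<Rightarrow> bool" where
  "ptaut \<psi> \<longleftrightarrow> cond_free \<psi> \<and> (\<forall>v. peval v \<psi>)"

fun subst :: "(nat \<Rightarrow> 'a form) \<Rightarrow> nat form \<Rightarrow> 'a form" where
  "subst \<sigma> (Atom p) = \<sigma> p"
| "subst \<sigma> Bot = Bot"
| "subst \<sigma> (And a b) = And (subst \<sigma> a) (subst \<sigma> b)"
| "subst \<sigma> (Or a b) = Or (subst \<sigma> a) (subst \<sigma> b)"
| "subst \<sigma> (Imp a b) = Imp (subst \<sigma> a) (subst \<sigma> b)"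
| "subst \<sigma> (Cond a b) = Cond (subst \<sigma> a) (subst \<sigma> b)"

definition taut_inst :: "'a form \<Rightarrow> bool" where
  "taut_inst \<phi> \<longleftrightarrow> (\<exists>\<psi> \<sigma>. ptaut \<psi> \<and> \<phi> = subst \<sigma> \<psi>)"

datatype sys = sCE | sCM | sCEN | sCMN | sCMC | sCK

fun hasM :: "sys \<Rightarrow> bool" where
  "hasM sCE = False" | "hasM sCM = True" | "hasM sCEN = False"
| "hasM sCMN = True" | "hasM sCMC = True" | "hasM sCK = True"

fun hasC :: "sys \<Rightarrow> bool" where
  "hasC sCE = False" | "hasC sCM = False" | "hasC sCEN = False"
| "hasC sCMN = False" | "hasC sCMC = True" | "hasC sCK = True"

fun hasN :: "sys \<Rightarrow> bool" where
  "hasN sCE = False" | "hasN sCM = False" | "hasN sCEN = True"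
| "hasN sCMN = True" | "hasN sCMC = False" | "hasN sCK = True"

inductive thm_in :: "sys \<Rightarrow> 'a form \<Rightarrow> bool" for s :: sys where
  taut: "taut_inst \<phi> \<Longrightarrow> thm_in s \<phi>"
| mp: "thm_in s (Imp \<phi> \<psi>) \<Longrightarrow> thm_in s \<phi> \<Longrightarrow> thm_in s \<psi>"
| RCE: "thm_in s (Iff \<phi>0 \<phi>1) \<Longrightarrow> thm_in s (Iff \<psi>0 \<psi>1) \<Longrightarrow>
        thm_in s (Imp (Cond \<phi>0 \<psi>0) (Cond \<phi>1 \<psi>1))"
| axCM: "hasM s \<Longrightarrow>
        thm_in s (Imp (Cond \<phi> (And \<psi> \<theta>)) (And (Cond \<phi> \<psi>) (Cond \<phi> \<theta>)))"
| axCC: "hasC s \<Longrightarrow>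
        thm_in s (Imp (And (Cond \<phi> \<psi>) (Cond \<phi> \<theta>)) (Cond \<phi> (And \<psi> \<theta>)))"
| axCN: "hasN s \<Longrightarrow> thm_in s (Cond \<phi> Top)"

definition logic :: "sys \<Rightarrow> 'a form set" where
  "logic s = {\<phi>. thm_in s \<phi>}"

datatype crule = rCE | rCM | rCMC

fun crule_of :: "sys \<Rightarrow> crule" where
  "crule_of sCE = rCE" | "crule_of sCEN = rCE"
| "crule_of sCM = rCM" | "crule_of sCMN = rCM"
| "crule_of sCMC = rCMC" | "crule_of sCK = rCMC"

inductive gder :: "sys \<Rightarrow> 'a form multiset \<Rightarrow> 'a form multiset \<Rightarrow> bool" for s :: sys where
  ax: "gder s (add_mset (Atom p) \<Gamma>) (add_mset (Atom p) \<Delta>)"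
| axBot: "gder s (add_mset Bot \<Gamma>) \<Delta>"
| LAnd: "gder s (add_mset \<phi> (add_mset \<psi> \<Gamma>)) \<Delta> \<Longrightarrow> gder s (add_mset (And \<phi> \<psi>) \<Gamma>) \<Delta>"
| RAnd: "gder s \<Gamma> (add_mset \<phi> \<Delta>) \<Longrightarrow> gder s \<Gamma> (add_mset \<psi> \<Delta>) \<Longrightarrow>
         gder s \<Gamma> (add_mset (And \<phi> \<psi>) \<Delta>)"
| LOr: "gder s (add_mset \<phi> \<Gamma>) \<Delta> \<Longrightarrow> gder s (add_mset \<psi> \<Gamma>) \<Delta> \<Longrightarrow>
        gder s (add_mset (Or \<phi> \<psi>) \<Gamma>) \<Delta>"
| ROr: "gder s \<Gamma> (add_mset \<phi> (add_mset \<psi> \<Delta>)) \<Longrightarrow> gder s \<Gamma> (add_mset (Or \<phi> \<psi>) \<Delta>)"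
| LImp: "gder s \<Gamma> (add_mset \<phi> \<Delta>) \<Longrightarrow> gder s (add_mset \<psi> \<Gamma>) \<Delta> \<Longrightarrow>
         gder s (add_mset (Imp \<phi> \<psi>) \<Gamma>) \<Delta>"
| RImp: "gder s (add_mset \<phi> \<Gamma>) (add_mset \<psi> \<Delta>) \<Longrightarrow> gder s \<Gamma> (add_mset (Imp \<phi> \<psi>) \<Delta>)"
| LW: "gder s \<Gamma> \<Delta> \<Longrightarrow> gder s (add_mset \<phi> \<Gamma>) \<Delta>"
| RW: "gder s \<Gamma> \<Delta> \<Longrightarrow> gder s \<Gamma> (add_mset \<phi> \<Delta>)"
| CE: "crule_of s = rCE \<Longrightarrow>
       gder s {#\<phi>0#} {#\<phi>1#} \<Longrightarrow> gder s {#\<phi>1#} {#\<phi>0#} \<Longrightarrow>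
       gder s {#\<psi>0#} {#\<psi>1#} \<Longrightarrow> gder s {#\<psi>1#} {#\<psi>0#} \<Longrightarrow>
       gder s {#Cond \<phi>1 \<psi>1#} {#Cond \<phi>0 \<psi>0#}"
| CM: "crule_of s = rCM \<Longrightarrow>
       gder s {#\<phi>0#} {#\<phi>1#} \<Longrightarrow> gder s {#\<phi>1#} {#\<phi>0#} \<Longrightarrow>
       gder s {#\<psi>1#} {#\<psi>0#} \<Longrightarrow>
       gder s {#Cond \<phi>1 \<psi>1#} {#Cond \<phi>0 \<psi>0#}"
| CMC: "crule_of s = rCMC \<Longrightarrow> length \<phi>s = length \<psi>s \<Longrightarrow> length \<phi>s \<ge> 1 \<Longrightarrow>
        (\<forall>i < length \<phi>s. gder s {#\<phi>0#} {#\<phi>s ! i#} \<and> gder s {#\<phi>s ! i#} {#\<phi>0#}) \<Longrightarrow>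
        gder s (mset \<psi>s) {#\<psi>0#} \<Longrightarrow>
        gder s (mset (map2 Cond \<phi>s \<psi>s)) {#Cond \<phi>0 \<psi>0#}"
| CN: "hasN s \<Longrightarrow> gder s {#} {#\<psi>0#} \<Longrightarrow> gder s {#} {#Cond \<phi>0 \<psi>0#}"

end

theory Submission
  imports Defs
begin

text \<open>
  Treat atoms and conditionals as propositional variables and call a valuation of them closed
  if it respects the conditional rule of the calculus and, if present, (CN), the premises of
  these rules being read as derivable sequents. A sequent is valid if every closed valuation
  satisfies it; derivable sequents are valid by induction on derivations.

  Conversely, valid sequents are derivable. The propositional rules are invertible, so consider
  a valid sequent of literals and the canonical valuation that makes true the atoms of its
  antecedent and exactly those conditionals obtained from antecedent conditionals by one
  application of the conditional rule, or of (CN), with valid premises. It satisfies the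
  antecedent, and it is closed because derivable premises are valid. Hence it makes some
  succedent formula true, which is either an atom of the antecedent, giving an axiom, or the
  conclusion of a rule application whose premises are valid, smaller, and so derivable by
  induction.

  Every theorem of the logic is valid, hence derivable; no cut elimination is needed, but
  validity of the instances of (RCE) and of the axioms relies on completeness for their
  premises. For the
  other inclusion, every rule of the calculus preserves the property of being a propositional
  consequence of finitely many theorems of the logic.
\<close>

section \<open>Valuations closed under the conditional rules\<close>

fun holds :: "('a form \<Rightarrow> bool) \<Rightarrow> 'a form \<Rightarrow> bool" where
  "holds V (Atom p) = V (Atom p)"
| "holds V Bot = False"
| "holds V (And a b) = (holds V a \<and> holds V b)"
| "holds V (Or a b) = (holds V a \<or> holds V b)"
| "holds V (Imp a b) = (holds V a \<longrightarrow> holds V b)"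
| "holds V (Cond a b) = V (Cond a b)"

lemma holds_Top [simp]: "holds V Top"
  by (simp add: Top_def)

lemma holds_Iff [simp]: "holds V (Iff a b) \<longleftrightarrow> (holds V a \<longleftrightarrow> holds V b)"
  by (auto simp: Iff_def)

definition sat :: "('a form \<Rightarrow> bool) \<Rightarrow> 'a form multiset \<Rightarrow> 'a form multiset \<Rightarrow> bool" where
  "sat V \<Gamma> \<Delta> \<longleftrightarrow> (\<forall>x\<in>#\<Gamma>. holds V x) \<longrightarrow> (\<exists>y\<in>#\<Delta>. holds V y)"

lemma hasM_crule: "hasM s \<Longrightarrow> crule_of s = rCM \<or> crule_of s = rCMC"
  by (cases s) auto

lemma hasC_crule: "hasC s \<Longrightarrow> crule_of s = rCMC"
  by (cases s) auto

lemma crule_rCM_hasM: "crule_of s = rCM \<Longrightarrow> hasM s"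
  by (cases s) auto

lemma crule_rCMC_hasM_hasC: "crule_of s = rCMC \<Longrightarrow> hasM s \<and> hasC s"
  by (cases s) auto

definition rule_closed :: "sys \<Rightarrow> ('a form \<Rightarrow> bool) \<Rightarrow> bool" where
  "rule_closed s V \<longleftrightarrow>
    (\<forall>a0 a1 b0 b1. crule_of s = rCE \<longrightarrow>
       gder s {#a0#} {#a1#} \<longrightarrow> gder s {#a1#} {#a0#} \<longrightarrow>
       gder s {#b0#} {#b1#} \<longrightarrow> gder s {#b1#} {#b0#} \<longrightarrow> V (Cond a1 b1) \<longrightarrow> V (Cond a0 b0)) \<and>
    (\<forall>a0 a1 b0 b1. crule_of s = rCM \<longrightarrow>
       gder s {#a0#} {#a1#} \<longrightarrow> gder s {#a1#} {#a0#} \<longrightarrow>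
       gder s {#b1#} {#b0#} \<longrightarrow> V (Cond a1 b1) \<longrightarrow> V (Cond a0 b0)) \<and>
    (\<forall>as bs a0 b0. crule_of s = rCMC \<longrightarrow> length as = length bs \<longrightarrow> as \<noteq> [] \<longrightarrow>
       (\<forall>i<length as. gder s {#a0#} {#as ! i#} \<and> gder s {#as ! i#} {#a0#}) \<longrightarrow>
       gder s (mset bs) {#b0#} \<longrightarrow> (\<forall>i<length as. V (Cond (as ! i) (bs ! i))) \<longrightarrow> V (Cond a0 b0)) \<and>
    (\<forall>a b. hasN s \<longrightarrow> gder s {#} {#b#} \<longrightarrow> V (Cond a b))"

lemma rule_closedD:
  assumes "rule_closed s V"
  shows rule_closed_CE: "\<lbrakk>crule_of s = rCE; gder s {#a0#} {#a1#}; gder s {#a1#} {#a0#};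
      gder s {#b0#} {#b1#}; gder s {#b1#} {#b0#}; V (Cond a1 b1)\<rbrakk> \<Longrightarrow> V (Cond a0 b0)"
    and rule_closed_CM: "\<lbrakk>crule_of s = rCM; gder s {#a0#} {#a1#}; gder s {#a1#} {#a0#};
      gder s {#b1#} {#b0#}; V (Cond a1 b1)\<rbrakk> \<Longrightarrow> V (Cond a0 b0)"
    and rule_closed_CMC: "\<lbrakk>crule_of s = rCMC; length as = length bs; as \<noteq> [];
      \<forall>i<length as. gder s {#a0#} {#as ! i#} \<and> gder s {#as ! i#} {#a0#};
      gder s (mset bs) {#b0#}; \<forall>i<length as. V (Cond (as ! i) (bs ! i))\<rbrakk> \<Longrightarrow> V (Cond a0 b0)"
    and rule_closed_CN: "\<lbrakk>hasN s; gder s {#} {#b#}\<rbrakk> \<Longrightarrow> V (Cond a b)"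
  using assms unfolding rule_closed_def by blast+

lemma rule_closed_cong:
  assumes "rule_closed s V"
    and "gder s {#a0#} {#a1#}" "gder s {#a1#} {#a0#}" "gder s {#b0#} {#b1#}" "gder s {#b1#} {#b0#}"
    and "V (Cond a1 b1)"
  shows "V (Cond a0 b0)"
proof (cases "crule_of s")
  case rCE
  then show ?thesis using rule_closed_CE[OF assms(1)] assms(2-) by blast
next
  case rCM
  then show ?thesis using rule_closed_CM[OF assms(1)] assms(2-) by blast
next
  case rCMC
  then show ?thesis using rule_closed_CMC[OF assms(1) rCMC, of "[a1]" "[b1]"] assms(2-) by simp
qed

lemma rule_closed_mono:
  assumes "rule_closed s V" "hasM s"
    and "gder s {#a0#} {#a1#}" "gder s {#a1#} {#a0#}" "gder s {#b1#} {#b0#}"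
    and "V (Cond a1 b1)"
  shows "V (Cond a0 b0)"
  using hasM_crule[OF assms(2)]
proof
  assume "crule_of s = rCM"
  then show ?thesis using rule_closed_CM[OF assms(1)] assms(3-) by blast
next
  assume "crule_of s = rCMC"
  then show ?thesis using rule_closed_CMC[OF assms(1), of "[a1]" "[b1]"] assms(3-) by simp
qed

definition valid :: "sys \<Rightarrow> 'a form multiset \<Rightarrow> 'a form multiset \<Rightarrow> bool" where
  "valid s \<Gamma> \<Delta> \<longleftrightarrow> (\<forall>V. rule_closed s V \<longrightarrow> sat V \<Gamma> \<Delta>)"

lemma valid_refl: "valid s {#a#} {#a#}"
  unfolding valid_def sat_def by auto

lemma valid_trans: "valid s \<Gamma> {#b#} \<Longrightarrow> valid s {#b#} {#c#} \<Longrightarrow> valid s \<Gamma> {#c#}"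
  unfolding valid_def sat_def by auto

lemma valid_cong_set_mset: "set_mset \<Gamma> = set_mset \<Gamma>' \<Longrightarrow> valid s \<Gamma> \<Delta> = valid s \<Gamma>' \<Delta>"
  unfolding valid_def sat_def by simp

lemma map2_Cond_nth_mem:
  "length xs = length ys \<Longrightarrow> i < length xs \<Longrightarrow> Cond (xs ! i) (ys ! i) \<in> set (map2 Cond xs ys)"
  by (metis (no_types, lifting) case_prod_conv length_map length_zip min.idem nth_map nth_mem
      nth_zip)

theorem gder_imp_valid: "gder s \<Gamma> \<Delta> \<Longrightarrow> valid s \<Gamma> \<Delta>"
proof (induction rule: gder.induct)
  case (CMC \<phi>s \<psi>s \<phi>0 \<psi>0)
  show ?case unfolding valid_def sat_def
  proof (intro allI impI)
    fix V :: "'a form \<Rightarrow> bool"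
    assume "rule_closed s V" and "\<forall>x\<in>#mset (map2 Cond \<phi>s \<psi>s). holds V x"
    moreover have "\<forall>i<length \<phi>s. Cond (\<phi>s ! i) (\<psi>s ! i) \<in> set (map2 Cond \<phi>s \<psi>s)"
      using map2_Cond_nth_mem[OF CMC(2)] by blast
    ultimately show "\<exists>y\<in>#{#Cond \<phi>0 \<psi>0#}. holds V y"
      using rule_closed_CMC[of s V \<phi>s \<psi>s \<phi>0 \<psi>0] CMC(1-5) by fastforce
  qed
qed (auto simp: valid_def sat_def rule_closed_def)

section \<open>Completeness\<close>

lemma gder_weaken: "gder s \<Gamma> \<Delta> \<Longrightarrow> \<Gamma> \<subseteq># \<Gamma>' \<Longrightarrow> \<Delta> \<subseteq># \<Delta>' \<Longrightarrow> gder s \<Gamma>' \<Delta>'"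
proof -
  assume d: "gder s \<Gamma> \<Delta>" and "\<Gamma> \<subseteq># \<Gamma>'" and "\<Delta> \<subseteq># \<Delta>'"
  then obtain X Y where "\<Gamma>' = \<Gamma> + X" and "\<Delta>' = \<Delta> + Y"
    by (metis subset_mset.add_diff_inverse)
  moreover have "gder s (\<Gamma> + X) \<Delta>" for X
    by (induction X) (auto simp: d intro: gder.LW)
  then have "gder s (\<Gamma> + X) (\<Delta> + Y)" for X Y
    by (induction Y) (auto intro: gder.RW)
  ultimately show ?thesis by simp
qed

definition seq_size :: "'a form multiset \<Rightarrow> 'a form multiset \<Rightarrow> nat" where
  "seq_size \<Gamma> \<Delta> = (\<Sum>x\<in>#\<Gamma>. size x) + (\<Sum>x\<in>#\<Delta>. size x)"

lemma seq_size_add_mset [simp]: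
  "seq_size (add_mset x \<Gamma>) \<Delta> = size x + seq_size \<Gamma> \<Delta>"
  "seq_size \<Gamma> (add_mset x \<Delta>) = size x + seq_size \<Gamma> \<Delta>"
  by (simp_all add: seq_size_def)

lemma seq_size_mono: "\<Gamma>' \<subseteq># \<Gamma> \<Longrightarrow> \<Delta>' \<subseteq># \<Delta> \<Longrightarrow> seq_size \<Gamma>' \<Delta>' \<le> seq_size \<Gamma> \<Delta>"
  unfolding seq_size_def
  by (metis add_mono image_mset_subseteq_mono le_add1 subset_mset.add_diff_inverse sum_mset.union)

fun is_lit :: "'a form \<Rightarrow> bool" where
  "is_lit (Atom p) = True"
| "is_lit (Cond a b) = True"
| "is_lit _ = False"

lemma valid_imp_gder_left:
  fixes X :: "'a form"
  assumes IH: "\<And>\<Gamma>' \<Delta>' :: 'a form multiset. seq_size \<Gamma>' \<Delta>' < seq_size (add_mset X \<Gamma>) \<Delta> \<Longrightarrow>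
      valid s \<Gamma>' \<Delta>' \<Longrightarrow> gder s \<Gamma>' \<Delta>'"
    and "\<not> is_lit X" and v: "valid s (add_mset X \<Gamma>) \<Delta>"
  shows "gder s (add_mset X \<Gamma>) \<Delta>"
  using assms(2)
proof (cases X)
  case (And a b)
  show ?thesis unfolding And
    by (rule gder.LAnd; rule IH[unfolded And]) (use v And in \<open>auto simp: valid_def sat_def\<close>)
next
  case (Or a b)
  show ?thesis unfolding Or
    by (rule gder.LOr; rule IH[unfolded Or]) (use v Or in \<open>auto simp: valid_def sat_def\<close>)
next
  case (Imp a b)
  show ?thesis unfolding Imp
    by (rule gder.LImp; rule IH[unfolded Imp]) (use v Imp in \<open>auto simp: valid_def sat_def\<close>)
qed (auto intro: gder.axBot)

lemma valid_imp_gder_right: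
  fixes X :: "'a form"
  assumes IH: "\<And>\<Gamma>' \<Delta>' :: 'a form multiset. seq_size \<Gamma>' \<Delta>' < seq_size \<Gamma> (add_mset X \<Delta>) \<Longrightarrow>
      valid s \<Gamma>' \<Delta>' \<Longrightarrow> gder s \<Gamma>' \<Delta>'"
    and "\<not> is_lit X" "X \<noteq> Bot" and v: "valid s \<Gamma> (add_mset X \<Delta>)"
  shows "gder s \<Gamma> (add_mset X \<Delta>)"
  using assms(2,3)
proof (cases X)
  case (And a b)
  show ?thesis unfolding And
    by (rule gder.RAnd; rule IH[unfolded And]) (use v And in \<open>auto simp: valid_def sat_def\<close>)
next
  case (Or a b)
  show ?thesis unfolding Or
    by (rule gder.ROr; rule IH[unfolded Or]) (use v Or in \<open>auto simp: valid_def sat_def\<close>)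
next
  case (Imp a b)
  show ?thesis unfolding Imp
    by (rule gder.RImp; rule IH[unfolded Imp]) (use v Imp in \<open>auto simp: valid_def sat_def\<close>)
qed auto

text \<open>\<open>L\<close> lists the principal conditionals \<open>(a', b')\<close> of one application of the conditional rule
  with conclusion \<open>Cond a b\<close>, \<open>L = []\<close> standing for (CN).\<close>

definition supports :: "sys \<Rightarrow> ('a form \<times> 'a form) list \<Rightarrow> 'a form \<Rightarrow> 'a form \<Rightarrow> bool" where
  "supports s L a b \<longleftrightarrow>
    (L \<noteq> [] \<or> hasN s) \<and> (crule_of s \<noteq> rCMC \<longrightarrow> length L \<le> 1) \<and>
    (\<forall>(a', b')\<in>set L. valid s {#a#} {#a'#} \<and> valid s {#a'#} {#a#} \<and>
       (crule_of s = rCE \<longrightarrow> valid s {#b#} {#b'#})) \<and>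
    valid s (mset (map snd L)) {#b#}"

fun canon_val :: "sys \<Rightarrow> 'a form multiset \<Rightarrow> 'a form \<Rightarrow> bool" where
  "canon_val s \<Gamma> (Atom p) \<longleftrightarrow> Atom p \<in># \<Gamma>"
| "canon_val s \<Gamma> (Cond a b) \<longleftrightarrow> (\<exists>L. (\<forall>(a', b')\<in>set L. Cond a' b' \<in># \<Gamma>) \<and> supports s L a b)"
| "canon_val s \<Gamma> _ \<longleftrightarrow> False"

lemma supports_cong:
  assumes "supports s L a1 b1"
    and "valid s {#a0#} {#a1#}" "valid s {#a1#} {#a0#}" "valid s {#b1#} {#b0#}"
    and "crule_of s = rCE \<Longrightarrow> valid s {#b0#} {#b1#}"
  shows "supports s L a0 b0"
  using assms unfolding supports_def by (blast intro: valid_trans)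

lemma supports_Nil: "hasN s \<Longrightarrow> valid s {#} {#b#} \<Longrightarrow> supports s [] a b"
  by (simp add: supports_def)

lemma valid_concat:
  assumes "valid s (mset bs) {#b0#}" and "\<forall>i<length bs. valid s (mset (Bs i)) {#bs ! i#}"
  shows "valid s (mset (concat (map Bs [0..<length bs]))) {#b0#}"
  unfolding valid_def sat_def
proof (intro allI impI)
  fix V :: "'a form \<Rightarrow> bool"
  assume V: "rule_closed s V" and "\<forall>x\<in>#mset (concat (map Bs [0..<length bs])). holds V x"
  then have "\<forall>i<length bs. \<forall>x\<in>#mset (Bs i). holds V x" by auto
  then have "\<forall>x\<in>set bs. holds V x"
    using assms(2) V by (auto simp: valid_def sat_def in_set_conv_nth)
  then show "\<exists>y\<in>#{#b0#}. holds V y" using assms(1) V by (auto simp: valid_def sat_def)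
qed

lemma supports_concat:
  assumes "crule_of s = rCMC" "length as = length bs" "as \<noteq> []"
    and "\<forall>i<length as. valid s {#a0#} {#as ! i#} \<and> valid s {#as ! i#} {#a0#}"
    and "valid s (mset bs) {#b0#}"
    and "\<forall>i<length as. supports s (Ls i) (as ! i) (bs ! i)"
  shows "supports s (concat (map Ls [0..<length as])) a0 b0"
proof -
  have "Ls 0 \<noteq> [] \<or> hasN s"
    using assms(3,6) by (auto simp: supports_def)
  then have "concat (map Ls [0..<length as]) \<noteq> [] \<or> hasN s"
    using assms(3) by (auto simp: concat_eq_Nil_conv)
  moreover have "valid s {#a0#} {#a'#} \<and> valid s {#a'#} {#a0#}"
    if "(a', b') \<in> set (concat (map Ls [0..<length as]))" for a' b'
  proof -
    from that obtain i where "i < length as" "(a', b') \<in> set (Ls i)" by auto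
    then show ?thesis using assms(4,6) unfolding supports_def by (blast intro: valid_trans)
  qed
  moreover have "valid s (mset (concat (map (map snd \<circ> Ls) [0..<length bs]))) {#b0#}"
    using valid_concat[OF assms(5)] assms(2,6) by (simp add: supports_def)
  ultimately show ?thesis
    using assms(1,2) by (auto simp: supports_def map_concat)
qed

lemma canon_val_closed: "rule_closed s (canon_val s \<Gamma>)"
  unfolding rule_closed_def
proof (intro conjI allI impI)
  fix a0 a1 b0 b1
  assume "crule_of s = rCE" and d: "gder s {#a0#} {#a1#}" "gder s {#a1#} {#a0#}"
    "gder s {#b0#} {#b1#}" "gder s {#b1#} {#b0#}" and "canon_val s \<Gamma> (Cond a1 b1)"
  then show "canon_val s \<Gamma> (Cond a0 b0)"
    using supports_cong[OF _ d(1,2,4,3)[THEN gder_imp_valid]] by auto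
next
  fix a0 a1 b0 b1
  assume "crule_of s = rCM" and d: "gder s {#a0#} {#a1#}" "gder s {#a1#} {#a0#}"
    "gder s {#b1#} {#b0#}" and "canon_val s \<Gamma> (Cond a1 b1)"
  then show "canon_val s \<Gamma> (Cond a0 b0)"
    using supports_cong[OF _ d[THEN gder_imp_valid]] by auto
next
  fix as bs a0 b0
  assume r: "crule_of s = rCMC" and len: "length as = length bs" and ne: "as \<noteq> []"
    and a: "\<forall>i<length as. gder s {#a0#} {#as ! i#} \<and> gder s {#as ! i#} {#a0#}"
    and b: "gder s (mset bs) {#b0#}"
    and V: "\<forall>i<length as. canon_val s \<Gamma> (Cond (as ! i) (bs ! i))"
  obtain Ls where Ls: "\<forall>i<length as. (\<forall>(a', b')\<in>set (Ls i). Cond a' b' \<in># \<Gamma>) \<and>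
      supports s (Ls i) (as ! i) (bs ! i)"
    using V by simp metis
  have "supports s (concat (map Ls [0..<length as])) a0 b0"
    using supports_concat[OF r len ne _ gder_imp_valid[OF b]] a Ls by (simp add: gder_imp_valid)
  moreover have "\<forall>(a', b')\<in>set (concat (map Ls [0..<length as])). Cond a' b' \<in># \<Gamma>"
    using Ls by fastforce
  ultimately show "canon_val s \<Gamma> (Cond a0 b0)" by (metis canon_val.simps(2))
next
  fix a b :: "'a form"
  assume "hasN s" "gder s {#} {#b#}"
  then have "supports s [] a b" by (simp add: supports_Nil gder_imp_valid)
  then show "canon_val s \<Gamma> (Cond a b)" by (auto intro!: exI[of _ "[]"])
qed

lemma canon_val_antecedent:
  assumes "\<forall>X\<in>#\<Gamma>. is_lit X" and "x \<in># \<Gamma>"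
  shows "holds (canon_val s \<Gamma>) x"
proof (cases x)
  case (Cond a b)
  have "supports s [(a, b)] a b" by (simp add: supports_def valid_refl)
  then show ?thesis using assms(2) Cond by (auto intro!: exI[of _ "[(a, b)]"])
qed (use assms in auto)

lemma supports_remdups: "supports s L a b \<Longrightarrow> supports s (remdups L) a b"
  unfolding supports_def
  using valid_cong_set_mset[of "mset (map snd (remdups L))" "mset (map snd L)" s "{#b#}"]
  by (auto simp: le_trans[OF length_remdups_leq])

lemma size_le_sum_conds:
  "(a, b) \<in> set L \<Longrightarrow> size (Cond a b) \<le> (\<Sum>x\<in>#mset (map (case_prod Cond) L). size x)"
  by (induction L) auto

lemma sum_size_snd_le_sum_conds:
  "(\<Sum>x\<in>#mset (map snd L). size x) \<le> (\<Sum>x\<in>#mset (map (case_prod Cond) L). size x)"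
  by (induction L) auto

lemma gder_of_supports:
  fixes L :: "('a form \<times> 'a form) list"
  defines "C \<equiv> mset (map (case_prod Cond) L)"
  assumes IH: "\<And>\<Gamma>' \<Delta>' :: 'a form multiset. seq_size \<Gamma>' \<Delta>' < seq_size C {#Cond a b#} \<Longrightarrow>
      valid s \<Gamma>' \<Delta>' \<Longrightarrow> gder s \<Gamma>' \<Delta>'"
    and sup: "supports s L a b"
  shows "gder s C {#Cond a b#}"
proof -
  have prem: "gder s {#a#} {#fst x#} \<and> gder s {#fst x#} {#a#} \<and>
      (crule_of s = rCE \<longrightarrow> gder s {#b#} {#snd x#})" if "x \<in> set L" for x
    using size_le_sum_conds[of "fst x" "snd x" L] sup that
    by (auto intro!: IH simp: C_def seq_size_def supports_def)
  have concl: "gder s (mset (map snd L)) {#b#}"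
    using sum_size_snd_le_sum_conds[of L] sup
    by (auto intro!: IH simp: C_def seq_size_def supports_def)
  consider "L = []" | "L \<noteq> []" "crule_of s = rCMC" | a' b' where "L = [(a', b')]" "crule_of s \<noteq> rCMC"
    using sup by (cases L) (auto simp: supports_def)
  then show ?thesis
  proof cases
    case 1
    then show ?thesis using sup concl by (auto simp: C_def supports_def intro: gder.CN)
  next
    case 2
    have "gder s (mset (map2 Cond (map fst L) (map snd L))) {#Cond a b#}"
      using prem[OF nth_mem] concl 2 by (intro gder.CMC) (auto simp: Suc_le_eq)
    then show ?thesis by (simp add: C_def zip_map_fst_snd)
  next
    case 3
    then show ?thesis using prem concl
      by (cases "crule_of s") (auto simp: C_def intro: gder.CE gder.CM)
  qed
qed

lemma mset_distinct_subseteq: "distinct xs \<Longrightarrow> set xs \<subseteq> set_mset M \<Longrightarrow> mset xs \<subseteq># M"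
  by (metis finite_set_mset mset_set_set mset_set_set_mset_msubset subset_imp_msubset_mset_set
      subset_mset.order_trans)

lemma gder_of_canon_val:
  fixes \<Gamma> \<Delta> :: "'a form multiset"
  assumes IH: "\<And>\<Gamma>' \<Delta>' :: 'a form multiset. seq_size \<Gamma>' \<Delta>' < seq_size \<Gamma> \<Delta> \<Longrightarrow>
      valid s \<Gamma>' \<Delta>' \<Longrightarrow> gder s \<Gamma>' \<Delta>'"
    and "canon_val s \<Gamma> (Cond a b)" and D: "{#Cond a b#} \<subseteq># \<Delta>"
  shows "gder s \<Gamma> \<Delta>"
proof -
  obtain L where L: "\<forall>(a', b')\<in>set L. Cond a' b' \<in># \<Gamma>" "supports s L a b"
    using assms(2) by auto
  define C where "C = mset (map (case_prod Cond) (remdups L))"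
  have "distinct (map (case_prod Cond) (remdups L))"
    by (simp add: distinct_map inj_on_def split: prod.splits)
  then have C: "C \<subseteq># \<Gamma>"
    unfolding C_def using L(1) by (intro mset_distinct_subseteq) auto
  have "gder s C {#Cond a b#}"
    unfolding C_def
  proof (rule gder_of_supports)
    show "supports s (remdups L) a b" using L(2) by (rule supports_remdups)
    show "gder s \<Gamma>' \<Delta>'"
      if "seq_size \<Gamma>' \<Delta>' < seq_size (mset (map (case_prod Cond) (remdups L))) {#Cond a b#}"
        and "valid s \<Gamma>' \<Delta>'" for \<Gamma>' \<Delta>' :: "'a form multiset"
    proof (rule IH[OF _ that(2)])
      show "seq_size \<Gamma>' \<Delta>' < seq_size \<Gamma> \<Delta>"
        using that(1) seq_size_mono[OF C D] unfolding C_def by linarith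
    qed
  qed
  then show ?thesis by (rule gder_weaken[OF _ C D])
qed

lemma valid_imp_gder_literals:
  fixes \<Gamma> \<Delta> :: "'a form multiset"
  assumes IH: "\<And>\<Gamma>' \<Delta>' :: 'a form multiset. seq_size \<Gamma>' \<Delta>' < seq_size \<Gamma> \<Delta> \<Longrightarrow>
      valid s \<Gamma>' \<Delta>' \<Longrightarrow> gder s \<Gamma>' \<Delta>'"
    and lits: "\<forall>X\<in>#\<Gamma>. is_lit X" "\<forall>X\<in>#\<Delta>. is_lit X \<or> X = Bot"
    and v: "valid s \<Gamma> \<Delta>"
  shows "gder s \<Gamma> \<Delta>"
proof -
  have "sat (canon_val s \<Gamma>) \<Gamma> \<Delta>" using v canon_val_closed unfolding valid_def by blast
  then obtain y where y: "y \<in># \<Delta>" "holds (canon_val s \<Gamma>) y"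
    using canon_val_antecedent[OF lits(1)] unfolding sat_def by blast
  then consider (atom) p where "y = Atom p" | (cond) a b where "y = Cond a b"
    using lits(2) by (cases y) auto
  then show ?thesis
  proof cases
    case atom
    then have "Atom p \<in># \<Gamma>" "Atom p \<in># \<Delta>" using y by auto
    then obtain \<Gamma>' \<Delta>' where "\<Gamma> = add_mset (Atom p) \<Gamma>'" "\<Delta> = add_mset (Atom p) \<Delta>'"
      by (meson multi_member_split)
    then show ?thesis by (simp add: gder.ax)
  next
    case cond
    then show ?thesis using y by (intro gder_of_canon_val[OF IH]) auto
  qed
qed

theorem valid_imp_gder: "valid s \<Gamma> \<Delta> \<Longrightarrow> gder s \<Gamma> \<Delta>"
proof (induction "seq_size \<Gamma> \<Delta>" arbitrary: \<Gamma> \<Delta> rule: less_induct)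
  case less
  consider (left) X \<Gamma>' where "\<Gamma> = add_mset X \<Gamma>'" "\<not> is_lit X"
    | (right) X \<Delta>' where "\<Delta> = add_mset X \<Delta>'" "\<not> is_lit X" "X \<noteq> Bot"
    | (lits) "\<forall>X\<in>#\<Gamma>. is_lit X" "\<forall>X\<in>#\<Delta>. is_lit X \<or> X = Bot"
    by (metis multi_member_split)
  then show ?case
  proof cases
    case left
    then show ?thesis using valid_imp_gder_left less by blast
  next
    case right
    then show ?thesis using valid_imp_gder_right less by blast
  next
    case lits
    then show ?thesis using valid_imp_gder_literals less by blast
  qed
qed

section \<open>Theorems of the logics are valid\<close>

lemma holds_subst: "cond_free \<psi> \<Longrightarrow> holds V (subst \<sigma> \<psi>) = peval (\<lambda>p. holds V (\<sigma> p)) \<psi>"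
  by (induction \<psi>) auto

lemma gder_of_entails: "(\<And>V. rule_closed s V \<Longrightarrow> holds V a \<Longrightarrow> holds V b) \<Longrightarrow> gder s {#a#} {#b#}"
  by (rule valid_imp_gder) (auto simp: valid_def sat_def)

theorem thm_in_imp_valid: "thm_in s \<phi> \<Longrightarrow> valid s {#} {#\<phi>#}"
  unfolding valid_def sat_def
proof (induction rule: thm_in.induct)
  case (taut \<phi>)
  then obtain \<psi> \<sigma> where "ptaut \<psi>" "\<phi> = subst \<sigma> \<psi>" unfolding taut_inst_def by blast
  then show ?case unfolding ptaut_def by (simp add: holds_subst)
next
  case (RCE \<phi>0 \<phi>1 \<psi>0 \<psi>1)
  then have "gder s {#\<phi>1#} {#\<phi>0#}" "gder s {#\<phi>0#} {#\<phi>1#}"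
    "gder s {#\<psi>1#} {#\<psi>0#}" "gder s {#\<psi>0#} {#\<psi>1#}"
    by (auto intro!: gder_of_entails)
  then show ?case using rule_closed_cong by fastforce
next
  case (axCM \<phi> \<psi> \<theta>)
  have "gder s {#\<phi>#} {#\<phi>#}" "gder s {#And \<psi> \<theta>#} {#\<psi>#}" "gder s {#And \<psi> \<theta>#} {#\<theta>#}"
    by (auto intro!: gder_of_entails)
  then show ?case using rule_closed_mono[OF _ axCM] by fastforce
next
  case (axCC \<phi> \<psi> \<theta>)
  have "gder s {#\<phi>#} {#\<phi>#}" "gder s {#\<psi>, \<theta>#} {#And \<psi> \<theta>#}"
    by (auto intro!: gder_of_entails valid_imp_gder simp: valid_def sat_def)
  then show ?case
    using rule_closed_CMC[OF _ hasC_crule[OF axCC], of _ "[\<phi>, \<phi>]" "[\<psi>, \<theta>]" \<phi> "And \<psi> \<theta>"]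
    by (auto simp: less_Suc_eq nth_Cons')
next
  case (axCN \<phi>)
  have "gder s {#} {#Top#}" by (rule valid_imp_gder) (simp add: valid_def sat_def)
  then show ?case using rule_closed_CN axCN by fastforce
qed auto

section \<open>Derivable sequents follow from theorems\<close>

fun lits :: "'a form \<Rightarrow> 'a form set" where
  "lits (Atom p) = {Atom p}"
| "lits Bot = {}"
| "lits (And a b) = lits a \<union> lits b"
| "lits (Or a b) = lits a \<union> lits b"
| "lits (Imp a b) = lits a \<union> lits b"
| "lits (Cond a b) = {Cond a b}"

fun abstract :: "('a form \<Rightarrow> nat) \<Rightarrow> 'a form \<Rightarrow> nat form" where
  "abstract g (Atom p) = Atom (g (Atom p))"
| "abstract g Bot = Bot"
| "abstract g (And a b) = And (abstract g a) (abstract g b)"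
| "abstract g (Or a b) = Or (abstract g a) (abstract g b)"
| "abstract g (Imp a b) = Imp (abstract g a) (abstract g b)"
| "abstract g (Cond a b) = Atom (g (Cond a b))"

lemma finite_lits: "finite (lits \<phi>)"
  by (induction \<phi>) auto

lemma subst_abstract: "inj_on g A \<Longrightarrow> lits \<phi> \<subseteq> A \<Longrightarrow> subst (inv_into A g) (abstract g \<phi>) = \<phi>"
  by (induction \<phi>) auto

lemma cond_free_abstract: "cond_free (abstract g \<phi>)"
  by (induction \<phi>) auto

lemma peval_abstract: "peval v (abstract g \<phi>) = holds (v \<circ> g) \<phi>"
  by (induction \<phi>) auto

lemma taut_inst_of_holds:
  assumes "\<And>V. holds V \<phi>"
  shows "taut_inst \<phi>"
proof -
  obtain g :: "'a form \<Rightarrow> nat" where g: "inj_on g (lits \<phi>)"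
    using finite_imp_inj_to_nat_seg[OF finite_lits] by blast
  have "ptaut (abstract g \<phi>)"
    unfolding ptaut_def using assms by (simp add: cond_free_abstract peval_abstract)
  moreover have "\<phi> = subst (inv_into (lits \<phi>) g) (abstract g \<phi>)"
    using subst_abstract[OF g] by simp
  ultimately show ?thesis unfolding taut_inst_def by blast
qed

lemma thm_in_consequence:
  "\<forall>h\<in>set hs. thm_in s h \<Longrightarrow> (\<And>V. \<forall>h\<in>set hs. holds V h \<Longrightarrow> holds V \<phi>) \<Longrightarrow> thm_in s \<phi>"
proof (induction hs arbitrary: \<phi>)
  case Nil
  then show ?case by (intro thm_in.taut taut_inst_of_holds) simp
next
  case (Cons h hs)
  have "thm_in s (Imp h \<phi>)" using Cons.prems by (intro Cons.IH) auto
  moreover have "thm_in s h" using Cons.prems(1) by simp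
  ultimately show ?case by (rule thm_in.mp)
qed

definition provable :: "sys \<Rightarrow> 'a form multiset \<Rightarrow> 'a form multiset \<Rightarrow> bool" where
  "provable s \<Gamma> \<Delta> \<longleftrightarrow>
    (\<exists>hs. (\<forall>h\<in>set hs. thm_in s h) \<and> (\<forall>V. (\<forall>h\<in>set hs. holds V h) \<longrightarrow> sat V \<Gamma> \<Delta>))"

lemma provableI:
  "\<forall>h\<in>set hs. thm_in s h \<Longrightarrow> (\<And>V. \<forall>h\<in>set hs. holds V h \<Longrightarrow> sat V \<Gamma> \<Delta>) \<Longrightarrow> provable s \<Gamma> \<Delta>"
  unfolding provable_def by blast

lemma provable_thm_in: "thm_in s h \<Longrightarrow> (\<And>V. holds V h \<Longrightarrow> sat V \<Gamma> \<Delta>) \<Longrightarrow> provable s \<Gamma> \<Delta>"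
  by (rule provableI[of "[h]"]) auto

lemma thm_in_of_provable:
  assumes "provable s \<Gamma> \<Delta>" and "\<And>V. sat V \<Gamma> \<Delta> \<Longrightarrow> holds V \<phi>"
  shows "thm_in s \<phi>"
proof -
  obtain hs where "\<forall>h\<in>set hs. thm_in s h" "\<forall>V. (\<forall>h\<in>set hs. holds V h) \<longrightarrow> sat V \<Gamma> \<Delta>"
    using assms(1) unfolding provable_def by blast
  then show ?thesis using assms(2) by (intro thm_in_consequence[of hs]) auto
qed

lemma provable_consequence1:
  "provable s \<Gamma>1 \<Delta>1 \<Longrightarrow> (\<And>V. sat V \<Gamma>1 \<Delta>1 \<Longrightarrow> sat V \<Gamma> \<Delta>) \<Longrightarrow> provable s \<Gamma> \<Delta>"
  unfolding provable_def by blast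

lemma provable_consequence2:
  assumes "provable s \<Gamma>1 \<Delta>1" "provable s \<Gamma>2 \<Delta>2"
    and "\<And>V. sat V \<Gamma>1 \<Delta>1 \<Longrightarrow> sat V \<Gamma>2 \<Delta>2 \<Longrightarrow> sat V \<Gamma> \<Delta>"
  shows "provable s \<Gamma> \<Delta>"
proof -
  obtain hs1 hs2 where "\<forall>h\<in>set hs1. thm_in s h" "\<forall>V. (\<forall>h\<in>set hs1. holds V h) \<longrightarrow> sat V \<Gamma>1 \<Delta>1"
    "\<forall>h\<in>set hs2. thm_in s h" "\<forall>V. (\<forall>h\<in>set hs2. holds V h) \<longrightarrow> sat V \<Gamma>2 \<Delta>2"
    using assms(1,2) unfolding provable_def by blast
  then show ?thesis using assms(3) by (intro provableI[of "hs1 @ hs2"]) auto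
qed

lemma thm_in_Iff_refl: "thm_in s (Iff a a)"
  by (rule thm_in_consequence[of "[]"]) simp_all

lemma thm_in_Iff_of_provable:
  assumes "provable s {#a#} {#b#}" "provable s {#b#} {#a#}"
  shows "thm_in s (Iff a b)"
proof -
  have "provable s {#} {#Iff a b#}"
    using assms by (rule provable_consequence2) (auto simp: sat_def)
  then show ?thesis by (rule thm_in_of_provable) (simp add: sat_def)
qed

lemma thm_in_mono:
  assumes "hasM s" "thm_in s (Iff a1 a0)" "thm_in s (Imp b1 b0)"
  shows "thm_in s (Imp (Cond a1 b1) (Cond a0 b0))"
proof -
  have "thm_in s (Iff b1 (And b0 b1))"
    using assms(3) by (intro thm_in_consequence[of "[Imp b1 b0]"]) auto
  then have "thm_in s (Imp (Cond a1 b1) (Cond a0 (And b0 b1)))"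
    using assms(2) by (rule thm_in.RCE[rotated])
  moreover have "thm_in s (Imp (Cond a0 (And b0 b1)) (And (Cond a0 b0) (Cond a0 b1)))"
    using assms(1) by (rule thm_in.axCM)
  ultimately show ?thesis
    by (intro thm_in_consequence[of "[Imp (Cond a1 b1) (Cond a0 (And b0 b1)),
      Imp (Cond a0 (And b0 b1)) (And (Cond a0 b0) (Cond a0 b1))]"]) auto
qed

fun big_and :: "'a form list \<Rightarrow> 'a form" where
  "big_and [] = Top"
| "big_and [x] = x"
| "big_and (x # y # xs) = And x (big_and (y # xs))"

lemma holds_big_and [simp]: "holds V (big_and xs) \<longleftrightarrow> (\<forall>x\<in>set xs. holds V x)"
  by (induction xs rule: big_and.induct) auto

lemma provable_Cond_big_and:
  assumes "hasC s" "xs \<noteq> []"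
  shows "provable s (mset (map (Cond a) xs)) {#Cond a (big_and xs)#}"
  using assms(2)
proof (induction xs rule: big_and.induct)
  case (2 x)
  show ?case by (rule provableI[of "[]"]) (simp_all add: sat_def)
next
  case (3 x y xs)
  have "provable s (mset (map (Cond a) (y # xs))) {#Cond a (big_and (y # xs))#}"
    using 3 by simp
  moreover have "provable s {#} {#Imp (And (Cond a x) (Cond a (big_and (y # xs))))
      (Cond a (And x (big_and (y # xs))))#}"
    by (rule provable_thm_in[OF thm_in.axCC[OF assms(1)]]) (simp add: sat_def)
  ultimately show ?case by (rule provable_consequence2) (auto simp: sat_def)
qed simp

lemma provable_CE_rule:
  assumes "provable s {#a0#} {#a1#}" "provable s {#a1#} {#a0#}"
    and "provable s {#b0#} {#b1#}" "provable s {#b1#} {#b0#}"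
  shows "provable s {#Cond a1 b1#} {#Cond a0 b0#}"
  using thm_in.RCE[OF thm_in_Iff_of_provable[OF assms(2,1)] thm_in_Iff_of_provable[OF assms(4,3)]]
  by (rule provable_thm_in) (simp add: sat_def)

lemma provable_CM_rule:
  assumes "hasM s" "provable s {#a0#} {#a1#}" "provable s {#a1#} {#a0#}" "provable s {#b1#} {#b0#}"
  shows "provable s {#Cond a1 b1#} {#Cond a0 b0#}"
proof -
  have "thm_in s (Imp b1 b0)" using assms(4) by (rule thm_in_of_provable) (simp add: sat_def)
  with assms(1) thm_in_Iff_of_provable[OF assms(3,2)]
  have "thm_in s (Imp (Cond a1 b1) (Cond a0 b0))" by (rule thm_in_mono)
  then show ?thesis by (rule provable_thm_in) (simp add: sat_def)
qed

lemma provable_CN_rule: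
  assumes "hasN s" "provable s {#} {#b#}"
  shows "provable s {#} {#Cond a b#}"
proof -
  have "thm_in s (Iff Top b)"
    using assms(2) by (rule thm_in_of_provable) (simp add: sat_def)
  then have "thm_in s (Imp (Cond a Top) (Cond a b))" by (rule thm_in.RCE[OF thm_in_Iff_refl])
  then show ?thesis
    using thm_in.axCN[OF assms(1)]
    by (intro provableI[of "[Imp (Cond a Top) (Cond a b), Cond a Top]"]) (auto simp: sat_def)
qed

lemma provable_Cond_antecedents:
  assumes len: "length \<phi>s = length \<psi>s"
    and eqv: "\<forall>i<length \<phi>s. thm_in s (Iff (\<phi>s ! i) \<phi>0)"
    and prov: "provable s (mset (map (Cond \<phi>0) \<psi>s)) \<Delta>"
  shows "provable s (mset (map2 Cond \<phi>s \<psi>s)) \<Delta>"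
proof -
  define H where "H = map (\<lambda>i. Imp (Cond (\<phi>s ! i) (\<psi>s ! i)) (Cond \<phi>0 (\<psi>s ! i))) [0..<length \<phi>s]"
  have H: "\<forall>h\<in>set H. thm_in s h"
    using eqv by (auto simp: H_def intro: thm_in.RCE[OF _ thm_in_Iff_refl])
  obtain hs where hs: "\<forall>h\<in>set hs. thm_in s h"
    "\<forall>V. (\<forall>h\<in>set hs. holds V h) \<longrightarrow> sat V (mset (map (Cond \<phi>0) \<psi>s)) \<Delta>"
    using prov unfolding provable_def by blast
  show ?thesis
  proof (rule provableI[of "H @ hs"])
    show "\<forall>h\<in>set (H @ hs). thm_in s h" using H hs(1) by auto
  next
    fix V
    assume thms: "\<forall>h\<in>set (H @ hs). holds V h"
    have "V (Cond \<phi>0 (\<psi>s ! i))" if "V (Cond (\<phi>s ! i) (\<psi>s ! i))" "i < length \<phi>s" for i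
    proof -
      have "Imp (Cond (\<phi>s ! i) (\<psi>s ! i)) (Cond \<phi>0 (\<psi>s ! i)) \<in> set H"
        using that(2) by (auto simp: H_def)
      then have "holds V (Imp (Cond (\<phi>s ! i) (\<psi>s ! i)) (Cond \<phi>0 (\<psi>s ! i)))"
        using thms by (simp only: set_append) blast
      then show ?thesis using that(1) by simp
    qed
    then have "(\<forall>x\<in>#mset (map2 Cond \<phi>s \<psi>s). holds V x) \<longrightarrow> (\<forall>x\<in>#mset (map (Cond \<phi>0) \<psi>s). holds V x)"
      using len map2_Cond_nth_mem[OF len] by (fastforce simp: in_set_conv_nth)
    then show "sat V (mset (map2 Cond \<phi>s \<psi>s)) \<Delta>"
      using thms hs(2) unfolding sat_def by auto
  qed
qed

lemma provable_CMC_rule: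
  assumes r: "crule_of s = rCMC" and len: "length \<phi>s = length \<psi>s" and ne: "\<phi>s \<noteq> []"
    and eqv: "\<forall>i<length \<phi>s. provable s {#\<phi>0#} {#\<phi>s ! i#} \<and> provable s {#\<phi>s ! i#} {#\<phi>0#}"
    and cons: "provable s (mset \<psi>s) {#\<psi>0#}"
  shows "provable s (mset (map2 Cond \<phi>s \<psi>s)) {#Cond \<phi>0 \<psi>0#}"
proof (rule provable_Cond_antecedents[OF len])
  show "\<forall>i<length \<phi>s. thm_in s (Iff (\<phi>s ! i) \<phi>0)"
    using eqv by (simp add: thm_in_Iff_of_provable)
  have M: "hasM s" and C: "hasC s" using crule_rCMC_hasM_hasC[OF r] by auto
  have "thm_in s (Imp (big_and \<psi>s) \<psi>0)" using cons by (rule thm_in_of_provable) (simp add: sat_def)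
  then have "provable s {#} {#Imp (Cond \<phi>0 (big_and \<psi>s)) (Cond \<phi>0 \<psi>0)#}"
    by (rule provable_thm_in[OF thm_in_mono[OF M thm_in_Iff_refl]]) (simp add: sat_def)
  moreover have "provable s (mset (map (Cond \<phi>0) \<psi>s)) {#Cond \<phi>0 (big_and \<psi>s)#}"
    using ne len by (intro provable_Cond_big_and[OF C]) auto
  ultimately show "provable s (mset (map (Cond \<phi>0) \<psi>s)) {#Cond \<phi>0 \<psi>0#}"
    by (rule provable_consequence2) (auto simp: sat_def)
qed

theorem gder_imp_provable: "gder s \<Gamma> \<Delta> \<Longrightarrow> provable s \<Gamma> \<Delta>"
proof (induction rule: gder.induct)
  case (LAnd \<phi> \<psi> \<Gamma> \<Delta>)
  from LAnd.IH show ?case by (rule provable_consequence1) (auto simp: sat_def)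
next
  case (RAnd \<Gamma> \<phi> \<Delta> \<psi>)
  from RAnd.IH show ?case by (rule provable_consequence2) (auto simp: sat_def)
next
  case (LOr \<phi> \<Gamma> \<Delta> \<psi>)
  from LOr.IH show ?case by (rule provable_consequence2) (auto simp: sat_def)
next
  case (ROr \<Gamma> \<phi> \<psi> \<Delta>)
  from ROr.IH show ?case by (rule provable_consequence1) (auto simp: sat_def)
next
  case (LImp \<Gamma> \<phi> \<Delta> \<psi>)
  from LImp.IH show ?case by (rule provable_consequence2) (auto simp: sat_def)
next
  case (RImp \<phi> \<Gamma> \<psi> \<Delta>)
  from RImp.IH show ?case by (rule provable_consequence1) (auto simp: sat_def)
next
  case (LW \<Gamma> \<Delta> \<phi>)
  from LW.IH show ?case by (rule provable_consequence1) (auto simp: sat_def)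
next
  case (RW \<Gamma> \<Delta> \<phi>)
  from RW.IH show ?case by (rule provable_consequence1) (auto simp: sat_def)
next
  case (CE \<phi>0 \<phi>1 \<psi>0 \<psi>1)
  from CE.IH show ?case by (rule provable_CE_rule)
next
  case (CM \<phi>0 \<phi>1 \<psi>1 \<psi>0)
  from CM.IH show ?case by (rule provable_CM_rule[OF crule_rCM_hasM[OF CM.hyps(1)]])
next
  case (CMC \<phi>s \<psi>s \<phi>0 \<psi>0)
  then show ?case by (intro provable_CMC_rule) auto
next
  case (CN \<psi>0 \<phi>0)
  from CN.hyps(1) CN.IH show ?case by (rule provable_CN_rule)
qed (auto simp: sat_def intro: provableI[of "[]"])

theorem mainTheorem3:
  fixes s :: sys and \<phi> :: "'a form"
  shows "gder s {#} {#\<phi>#} \<longleftrightarrow> \<phi> \<in> logic s"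
proof
  assume "gder s {#} {#\<phi>#}"
  then have "provable s {#} {#\<phi>#}" by (rule gder_imp_provable)
  then have "thm_in s \<phi>" by (rule thm_in_of_provable) (simp add: sat_def)
  then show "\<phi> \<in> logic s" by (simp add: logic_def)
next
  assume "\<phi> \<in> logic s"
  then have "thm_in s \<phi>" by (simp add: logic_def)
  then show "gder s {#} {#\<phi>#}" by (intro valid_imp_gder thm_in_imp_valid)
qed

end
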